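(* In the setting of the context (with assumptions (A.1)–(A.3)), suppose the PMM generates infinite sequences $\{(u_k,v_k)\}$, $\{(z_k,w_k)\}$, $\{\gamma_k\}$, $\{\rho_k\}$; define $x_k=z_{k-1}+\lambda w_{k-1}+\lambda(Cv_k-d)$, $y_k=x_k-\lambda(w_{k-1}-Mu_k)$, and for $k\ge1$ $$\Gamma_k=\sum_{j=1}^k\rho_j\gamma_j,\quad \bar u_k=\frac1{\Gamma_k}\sum_{j=1}^k\rho_j\gamma_ju_j,\quad \bar v_k=\frac1{\Gamma_k}\sum_{j=1}^k\rho_j\gamma_jv_j,\quad \bar x_k=\frac1{\Gamma_k}\sum_{j=1}^k\rho_j\gamma_jx_j,\quad \bar y_k=\frac1{\Gamma_k}\sum_{j=1}^k\rho_j\gamma_jy_j,$$ $$\bar\epsilon_k^u=\frac1{\Gamma_k}\sum_{j=1}^k\rho_j\gamma_j\langle u_j-\bar u_k,-M^*y_j\rangle,\qquad \bar\epsilon_k^v=\frac1{\Gamma_k}\sum_{j=1}^k\rho_j\gamma_j\langle v_j-\bar v_k,-C^*x_j\rangle.$$ Let $d_0$ be the distance from $(z_0,w_0)$ to $S_e(\partial h_1,\partial h_2)$, $\tau=\min\{\lambda,1/\lambda\}$ and $\vartheta=\frac{1}{\tau^2(1-\bar\rho)^2}+1$. Then for every integer $k\ge1$, $$0\in\partial_{\bar\epsilon_k^v}g(\bar v_k)+C^*\bar x_k,\qquad 0\in\partial_{\bar\epsilon_k^u}f(\bar u_k)+M^*\bar y_k,$$ $$\|M\bar u_k+C\bar v_k-d\|\le\frac{4d_0}{k(1-\bar\rho)\tau},\qquad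 \|\bar x_k-\bar y_k\|\le\frac{4d_0}{k(1-\bar\rho)\tau},\qquad \bar\epsilon_k^u+\bar\epsilon_k^v\le\frac{8d_0^2\vartheta}{k(1-\bar\rho)\tau}.$$
   Context: Let $f:\mathbb{R}^{m_1}\to(-\infty,\infty]$, $g:\mathbb{R}^{m_2}\to(-\infty,\infty]$ be proper closed convex, $M:\mathbb{R}^{m_1}\to\mathbb{R}^n$, $C:\mathbb{R}^{m_2}\to\mathbb{R}^n$ linear, $d\in\mathbb{R}^n$; consider $\min\{f(u)+g(v):Mu+Cv=d\}$ with Lagrangian $L(u,v,z)=f(u)+g(v)+\langle Mu+Cv-d,z\rangle$. A saddle point is $(u^*,v^*,z^* )$ with $L(u^*,v^*,z^* )$ finite and $\min_{(u,v)}L(u,v,z^* )=L(u^*,v^*,z^* )=\max_zL(u^*,v^*,z)$. Let $h_1(z)=f^*(-M^*z)$, $h_2(z)=g^*(-C^*z)+\langle d,z\rangle$ ($^*$ on functions = Fenchel conjugate, on operators = adjoint), and $S_e(\partial h_1,\partial h_2)=\{(z,w)\in\mathbb{R}^n\times\mathbb{R}^n:-w\in\partial h_1(z),\ w\in\partial h_2(z)\}$ (a closed convex set). Standing assumptions: (A.1) $L$ has a saddle point; (A.2) $\mathrm{ri}(\mathrm{dom} f^* )\cap\mathrm{range}(M^* )\ne\emptyset$; (A.3) $\mathrm{ri}(\mathrm{dom} g^* )\cap\mathrm{range}(C^* )\ne\emptyset$. For $\epsilon\ge0$, $\partial_\epsilon \theta(x)=\{s:\theta(x')\ge\theta(x)+\langle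 s,x'-x\rangle-\epsilon\ \forall x'\}$. PMM: given $(z_0,w_0)\in\mathbb{R}^n\times\mathbb{R}^n$, $\lambda>0$, $\bar\rho\in[0,1)$, for $k=1,2,\dots$: (1) let $v_k$ be a minimizer of $g(v)+\langle z_{k-1}+\lambda w_{k-1},Cv-d\rangle+\frac\lambda2\|Cv-d\|^2$ and $u_k$ a minimizer of $f(u)+\langle z_{k-1}+\lambda(Cv_k-d),Mu\rangle+\frac\lambda2\|Mu\|^2$; (2) if $\|Mu_k+Cv_k-d\|+\|Mu_k-w_{k-1}\|=0$ stop; otherwise set $\gamma_k=\dfrac{\lambda\|Cv_k-d+w_{k-1}\|^2+\lambda\langle d-Cv_k-Mu_k,w_{k-1}-Mu_k\rangle}{\|Mu_k+Cv_k-d\|^2+\lambda^2\|Mu_k-w_{k-1}\|^2}$; (3) choose $\rho_k\in[1-\bar\rho,1+\bar\rho]$ and set $z_k=z_{k-1}+\rho_k\gamma_k(Mu_k+Cv_k-d)$, $w_k=w_{k-1}-\rho_k\gamma_k\lambda(w_{k-1}-Mu_k)$. *)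

theory Defs
  imports "HOL-Analysis.Analysis" "HOL-Library.Extended_Real"
begin

definition proper_fun :: "('a \<Rightarrow> ereal) \<Rightarrow> bool" where
  "proper_fun f \<longleftrightarrow> (\<forall>x. f x \<noteq> -\<infinity>) \<and> (\<exists>x. f x \<noteq> \<infinity>)"

definition epigraph_e :: "('a \<Rightarrow> ereal) \<Rightarrow> ('a \<times> real) set" where
  "epigraph_e f = {(x, t). f x \<le> ereal t}"

definition convex_fun :: "('a::real_vector \<Rightarrow> ereal) \<Rightarrow> bool" where
  "convex_fun f \<longleftrightarrow> convex (epigraph_e f)"

definition closed_fun :: "('a::real_normed_vector \<Rightarrow> ereal) \<Rightarrow> bool" where
  "closed_fun f \<longleftrightarrow> closed (epigraph_e f)"

definition proper_closed_convex :: "('a::real_normed_vector \<Rightarrow> ereal) \<Rightarrow> bool" where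
  "proper_closed_convex f \<longleftrightarrow> proper_fun f \<and> closed_fun f \<and> convex_fun f"

definition fconj :: "('a::real_inner \<Rightarrow> ereal) \<Rightarrow> 'a \<Rightarrow> ereal" where
  "fconj f s = (SUP x. ereal (s \<bullet> x) - f x)"

definition edom :: "('a \<Rightarrow> ereal) \<Rightarrow> 'a set" where
  "edom f = {x. f x < \<infinity>}"

definition esubdiff :: "real \<Rightarrow> ('a::real_inner \<Rightarrow> ereal) \<Rightarrow> 'a \<Rightarrow> 'a set" where
  "esubdiff e \<theta> x = {s. \<forall>x'. \<theta> x' \<ge> \<theta> x + ereal (s \<bullet> (x' - x) - e)}"

definition subdiff :: "('a::real_inner \<Rightarrow> ereal) \<Rightarrow> 'a \<Rightarrow> 'a set" where
  "subdiff \<theta> x = esubdiff 0 \<theta> x"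

definition lagr :: "('a \<Rightarrow> ereal) \<Rightarrow> ('b \<Rightarrow> ereal) \<Rightarrow> ('a \<Rightarrow> 'c) \<Rightarrow> ('b \<Rightarrow> 'c) \<Rightarrow> 'c::real_inner
     \<Rightarrow> 'a \<Rightarrow> 'b \<Rightarrow> 'c \<Rightarrow> ereal" where
  "lagr f g M C d u v z = f u + g v + ereal ((M u + C v - d) \<bullet> z)"

definition saddle_point where
  "saddle_point f g M C d u0 v0 z0 \<longleftrightarrow>
     \<bar>lagr f g M C d u0 v0 z0\<bar> \<noteq> \<infinity> \<and>
     (\<forall>u v. lagr f g M C d u0 v0 z0 \<le> lagr f g M C d u v z0) \<and>
     (\<forall>z. lagr f g M C d u0 v0 z \<le> lagr f g M C d u0 v0 z0)"

definition h1 :: "('a::real_inner \<Rightarrow> ereal) \<Rightarrow> ('a \<Rightarrow> 'c::real_inner) \<Rightarrow> 'c \<Rightarrow> ereal" where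
  "h1 f M z = fconj f (- adjoint M z)"

definition h2 :: "('b::real_inner \<Rightarrow> ereal) \<Rightarrow> ('b \<Rightarrow> 'c::real_inner) \<Rightarrow> 'c \<Rightarrow> 'c \<Rightarrow> ereal" where
  "h2 g C d z = fconj g (- adjoint C z) + ereal (d \<bullet> z)"

definition Se :: "('c::real_inner \<Rightarrow> ereal) \<Rightarrow> ('c \<Rightarrow> ereal) \<Rightarrow> ('c \<times> 'c) set" where
  "Se \<phi> \<psi> = {(z, w). - w \<in> subdiff \<phi> z \<and> w \<in> subdiff \<psi> z}"

text \<open>Sequences generated by the PMM (infinite run: the stopping test never fires).\<close>
definition pmm_run where
  "pmm_run f g M C d lam rhobar u v z w gam rho \<longleftrightarrow>
    lam > 0 \<and> 0 \<le> rhobar \<and> rhobar < 1 \<and>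
    (\<forall>k\<ge>1.
      (\<forall>v'. g (v k) + ereal ((z (k-1) + lam *\<^sub>R w (k-1)) \<bullet> (C (v k) - d)) + ereal (lam / 2 * (norm (C (v k) - d))\<^sup>2)
          \<le> g v' + ereal ((z (k-1) + lam *\<^sub>R w (k-1)) \<bullet> (C v' - d)) + ereal (lam / 2 * (norm (C v' - d))\<^sup>2)) \<and>
      (\<forall>u'. f (u k) + ereal ((z (k-1) + lam *\<^sub>R (C (v k) - d)) \<bullet> M (u k)) + ereal (lam / 2 * (norm (M (u k)))\<^sup>2)
          \<le> f u' + ereal ((z (k-1) + lam *\<^sub>R (C (v k) - d)) \<bullet> M u') + ereal (lam / 2 * (norm (M u'))\<^sup>2)) \<and>
      norm (M (u k) + C (v k) - d) + norm (M (u k) - w (k-1)) \<noteq> 0 \<and>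
      gam k = (lam * (norm (C (v k) - d + w (k-1)))\<^sup>2
               + lam * ((d - C (v k) - M (u k)) \<bullet> (w (k-1) - M (u k))))
             / ((norm (M (u k) + C (v k) - d))\<^sup>2 + lam\<^sup>2 * (norm (M (u k) - w (k-1)))\<^sup>2) \<and>
      1 - rhobar \<le> rho k \<and> rho k \<le> 1 + rhobar \<and>
      z k = z (k-1) + (rho k * gam k) *\<^sub>R (M (u k) + C (v k) - d) \<and>
      w k = w (k-1) - (rho k * gam k * lam) *\<^sub>R (w (k-1) - M (u k)))"

end

theory Submission
  imports Defs
begin

text \<open>Each subproblem of the method is solved exactly, which gives subgradients
  \<open>-C\<^sup>*x\<^sub>k \<in> \<partial>g(v\<^sub>k)\<close> and \<open>-M\<^sup>*y\<^sub>k \<in> \<partial>f(u\<^sub>k)\<close>; by conjugate duality these become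
  \<open>d - C v\<^sub>k \<in> \<partial>h\<^sub>2(x\<^sub>k)\<close> and \<open>-M u\<^sub>k \<in> \<partial>h\<^sub>1(y\<^sub>k)\<close>.  Monotonicity of \<open>\<partial>h\<^sub>1\<close>, \<open>\<partial>h\<^sub>2\<close>
  against any point of \<open>S\<^sub>e\<close> makes a certain gap nonnegative, and the step size
  \<open>\<gamma>\<^sub>k\<close> is chosen so that \<open>\<rho>\<^sub>k\<gamma>\<^sub>k\<close> times the gap is bounded by the decrease of the
  squared distance from \<open>(z, w)\<close> to that point.  Hence the iterates are Fejer monotone
  with respect to \<open>S\<^sub>e\<close>.

  For the weighted averages, the transportation formula turns the exact subgradients
  into \<open>\<epsilon>\<close>-subgradients, the two residuals telescope to \<open>(z\<^sub>k - z\<^sub>0)/\<Gamma>\<^sub>k\<close> and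
  \<open>(w\<^sub>0 - w\<^sub>k)/\<Gamma>\<^sub>k\<close>, and \<open>\<Gamma>\<^sub>k(\<epsilon>\<^sup>u + \<epsilon>\<^sup>v)\<close> is the weighted sum of the gaps at the
  averaged point.  Finally \<open>\<gamma>\<^sub>k \<ge> \<tau>/2\<close> gives \<open>\<Gamma>\<^sub>k \<ge> k(1 - rhobar)\<tau>/2\<close>.\<close>

section \<open>Subdifferentials and conjugates\<close>

lemma subdiff_iff:
  "s \<in> subdiff \<theta> x \<longleftrightarrow> (\<forall>x'. \<theta> x + ereal (s \<bullet> (x' - x)) \<le> \<theta> x')"
  by (simp add: subdiff_def esubdiff_def)

lemma subdiff_finite:
  assumes "proper_fun \<theta>" and "s \<in> subdiff \<theta> x"
  shows "\<bar>\<theta> x\<bar> \<noteq> \<infinity>"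
proof -
  obtain x0 where "\<theta> x0 \<noteq> \<infinity>" and "\<theta> x0 \<noteq> -\<infinity>" "\<theta> x \<noteq> -\<infinity>"
    using assms(1) by (auto simp: proper_fun_def)
  moreover have "\<theta> x + ereal (s \<bullet> (x0 - x)) \<le> \<theta> x0"
    using assms(2) by (simp add: subdiff_iff)
  ultimately show ?thesis by auto
qed

lemma subdiff_monotone:
  assumes "s \<in> subdiff \<theta> x" and "t \<in> subdiff \<theta> y" and "\<bar>\<theta> x\<bar> \<noteq> \<infinity>"
  shows "0 \<le> (s - t) \<bullet> (x - y)"
proof -
  have sx: "\<theta> x + ereal (s \<bullet> (y - x)) \<le> \<theta> y" and ty: "\<theta> y + ereal (t \<bullet> (x - y)) \<le> \<theta> x"
    using assms(1,2) by (simp_all add: subdiff_iff)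
  obtain X where X: "\<theta> x = ereal X" using assms(3) by (cases "\<theta> x") auto
  then obtain Y where "\<theta> y = ereal Y" using sx ty by (cases "\<theta> y") auto
  with X sx ty show ?thesis by (simp add: algebra_simps)
qed

lemma subdiff_add_inner_iff:
  "s \<in> subdiff (\<lambda>x. \<theta> x + ereal (d \<bullet> x)) x \<longleftrightarrow> s - d \<in> subdiff \<theta> x"
proof -
  have "\<theta> x + ereal (d \<bullet> x) + ereal (s \<bullet> (x' - x)) \<le> \<theta> x' + ereal (d \<bullet> x')
    \<longleftrightarrow> \<theta> x + ereal ((s - d) \<bullet> (x' - x)) \<le> \<theta> x'" for x'
  proof -
    have "d \<bullet> x + s \<bullet> (x' - x) - d \<bullet> x' = (s - d) \<bullet> (x' - x)"
      by (simp add: inner_diff_left inner_diff_right)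
    then show ?thesis
      by (cases "\<theta> x"; cases "\<theta> x'") (auto simp: algebra_simps)
  qed
  then show ?thesis by (simp add: subdiff_iff)
qed

lemma fconj_ge: "ereal (s \<bullet> x) - \<theta> x \<le> fconj \<theta> s"
  unfolding fconj_def by (rule SUP_upper) simp

lemma fconj_eq_of_subdiff:
  assumes "s \<in> subdiff \<theta> x" and "\<theta> x = ereal T"
  shows "fconj \<theta> s = ereal (s \<bullet> x - T)"
proof (rule order.antisym)
  show "fconj \<theta> s \<le> ereal (s \<bullet> x - T)"
    unfolding fconj_def
  proof (rule SUP_least)
    fix x'
    have "ereal (T + s \<bullet> (x' - x)) \<le> \<theta> x'"
      using assms by (simp add: subdiff_iff)
    then show "ereal (s \<bullet> x') - \<theta> x' \<le> ereal (s \<bullet> x - T)"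
      by (cases "\<theta> x'") (auto simp: inner_diff_right)
  qed
  show "ereal (s \<bullet> x - T) \<le> fconj \<theta> s"
    using fconj_ge[of s x \<theta>] assms(2) by simp
qed

lemma subdiff_fconj:
  assumes "s \<in> subdiff \<theta> x" and "\<bar>\<theta> x\<bar> \<noteq> \<infinity>"
  shows "x \<in> subdiff (fconj \<theta>) s"
proof -
  obtain T where T: "\<theta> x = ereal T" using assms(2) by (cases "\<theta> x") auto
  have "fconj \<theta> s + ereal (x \<bullet> (s' - s)) \<le> fconj \<theta> s'" for s'
    using fconj_eq_of_subdiff[OF assms(1) T] fconj_ge[of s' x \<theta>] T
    by (simp add: inner_commute inner_diff_right)
  then show ?thesis by (simp add: subdiff_iff)
qed

lemma subdiff_comp_linear:
  fixes B :: "'a::euclidean_space \<Rightarrow> 'b::euclidean_space"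
  assumes "linear B" and "t \<in> subdiff \<phi> (B z)"
  shows "adjoint B t \<in> subdiff (\<lambda>z. \<phi> (B z)) z"
proof -
  have "adjoint B t \<bullet> (z' - z) = t \<bullet> (B z' - B z)" for z'
    using adjoint_works[OF assms(1)] linear_diff[OF assms(1)] by (metis inner_commute)
  with assms(2) show ?thesis by (simp add: subdiff_iff)
qed

lemma adjoint_neg_adjoint:
  fixes A :: "'a::euclidean_space \<Rightarrow> 'b::euclidean_space"
  assumes "linear A"
  shows "adjoint (\<lambda>z. - adjoint A z) = (\<lambda>x. - A x)"
  by (rule adjoint_unique) (simp add: adjoint_works[OF assms] inner_commute)

lemma linear_neg_adjoint:
  fixes A :: "'a::euclidean_space \<Rightarrow> 'b::euclidean_space"
  shows "linear A \<Longrightarrow> linear (\<lambda>y. - adjoint A y)"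
  by (simp add: adjoint_linear linear_compose_neg)

lemma subdiff_h1:
  fixes M :: "'a::euclidean_space \<Rightarrow> 'c::euclidean_space"
  assumes "linear M" and "- adjoint M z \<in> subdiff f u" and "\<bar>f u\<bar> \<noteq> \<infinity>"
  shows "- M u \<in> subdiff (h1 f M) z" and "\<bar>h1 f M z\<bar> \<noteq> \<infinity>"
proof -
  from subdiff_comp_linear[OF linear_neg_adjoint[OF assms(1)] subdiff_fconj[OF assms(2,3)]]
  show "- M u \<in> subdiff (h1 f M) z"
    by (simp add: h1_def[abs_def] adjoint_neg_adjoint[OF assms(1)])
  show "\<bar>h1 f M z\<bar> \<noteq> \<infinity>"
    using assms(3) fconj_eq_of_subdiff[OF assms(2)] by (cases "f u") (auto simp: h1_def)
qed

lemma subdiff_h2: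
  fixes C :: "'b::euclidean_space \<Rightarrow> 'c::euclidean_space"
  assumes "linear C" and "- adjoint C z \<in> subdiff g v" and "\<bar>g v\<bar> \<noteq> \<infinity>"
  shows "d - C v \<in> subdiff (h2 g C d) z" and "\<bar>h2 g C d z\<bar> \<noteq> \<infinity>"
proof -
  have "- C v \<in> subdiff (h1 g C) z" and fin: "\<bar>h1 g C z\<bar> \<noteq> \<infinity>"
    using subdiff_h1[OF assms] by auto
  then show "d - C v \<in> subdiff (h2 g C d) z"
    using subdiff_add_inner_iff[of "d - C v" "h1 g C" d z]
    by (simp add: h1_def h2_def[abs_def])
  show "\<bar>h2 g C d z\<bar> \<noteq> \<infinity>"
    using fin by (cases "h1 g C z") (auto simp: h1_def h2_def)
qed

lemma saddle_point_in_Se: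
  fixes f :: "'a::euclidean_space \<Rightarrow> ereal" and g :: "'b::euclidean_space \<Rightarrow> ereal"
    and M :: "'a \<Rightarrow> 'c::euclidean_space" and C :: "'b \<Rightarrow> 'c"
  assumes "proper_fun f" "proper_fun g" "linear M" "linear C"
    and saddle: "saddle_point f g M C d us vs zs"
  shows "(zs, M us) \<in> Se (h1 f M) (h2 g C d)"
proof -
  let ?L = "lagr f g M C d"
  have fin: "\<bar>?L us vs zs\<bar> \<noteq> \<infinity>" and min: "\<And>u v. ?L us vs zs \<le> ?L u v zs"
    and max: "\<And>z. ?L us vs z \<le> ?L us vs zs"
    using saddle by (auto simp: saddle_point_def)
  have not_MInf: "\<And>u. f u \<noteq> -\<infinity>" "\<And>v. g v \<noteq> -\<infinity>" using assms(1,2) by (auto simp: proper_fun_def)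
  obtain F G where F: "f us = ereal F" and G: "g vs = ereal G"
    using fin not_MInf by (cases "f us"; cases "g vs") (auto simp: lagr_def)
  define R where "R = M us + C vs - d"
  text \<open>Maximality in \<open>z\<close> forces primal feasibility.\<close>
  have "R \<bullet> (zs + R) \<le> R \<bullet> zs" using max[of "zs + R"] F G by (simp add: lagr_def R_def)
  then have "R \<bullet> R \<le> 0" by (simp add: inner_add_right)
  then have "R = 0" by (metis inner_ge_zero order.antisym inner_eq_zero_iff)
  then have feasible: "M us + C vs = d" by (simp add: R_def)
  have "- adjoint M zs \<in> subdiff f us"
  proof -
    have "f us + ereal ((- adjoint M zs) \<bullet> (u - us)) \<le> f u" for u
    proof -
      have "M u + C vs - d = M (u - us)"
        by (simp add: feasible[symmetric] linear_diff[OF assms(3)])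
      then have "(M u + C vs - d) \<bullet> zs = (u - us) \<bullet> adjoint M zs"
        by (simp add: adjoint_works[OF assms(3)])
      with min[of u vs] F G not_MInf(1)[of u] show ?thesis
        by (cases "f u") (auto simp: lagr_def feasible inner_commute)
    qed
    then show ?thesis by (simp add: subdiff_iff)
  qed
  moreover have "- adjoint C zs \<in> subdiff g vs"
  proof -
    have "g vs + ereal ((- adjoint C zs) \<bullet> (v - vs)) \<le> g v" for v
    proof -
      have "M us + C v - d = C (v - vs)"
        by (simp add: feasible[symmetric] linear_diff[OF assms(4)])
      then have "(M us + C v - d) \<bullet> zs = (v - vs) \<bullet> adjoint C zs"
        by (simp add: adjoint_works[OF assms(4)])
      with min[of us v] F G not_MInf(2)[of v] show ?thesis
        by (cases "g v") (auto simp: lagr_def feasible inner_commute)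
    qed
    then show ?thesis by (simp add: subdiff_iff)
  qed
  ultimately show ?thesis
    using subdiff_h1(1)[OF assms(3), of zs f us] subdiff_h2(1)[OF assms(4), of zs g vs d] F G
    unfolding Se_def by (simp add: feasible[symmetric])
qed

section \<open>Convex functions\<close>

lemma convex_fun_combination_le:
  assumes "convex_fun \<theta>" "\<theta> x \<le> ereal T" "\<theta> x' \<le> ereal T'" "0 \<le> t" "t \<le> 1"
  shows "\<theta> ((1 - t) *\<^sub>R x + t *\<^sub>R x') \<le> ereal ((1 - t) * T + t * T')"
proof -
  have "(1 - t) *\<^sub>R (x, T) + t *\<^sub>R (x', T') \<in> epigraph_e \<theta>"
    using assms by (intro convexD) (auto simp: convex_fun_def epigraph_e_def)
  then show ?thesis by (simp add: epigraph_e_def)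
qed

lemma convex_fun_sum_le:
  assumes "convex_fun \<theta>" "finite I" "sum \<mu> I = 1" "\<And>j. j \<in> I \<Longrightarrow> 0 \<le> \<mu> j"
    and "\<And>j. j \<in> I \<Longrightarrow> \<theta> (p j) \<le> ereal (T j)"
  shows "\<theta> (\<Sum>j\<in>I. \<mu> j *\<^sub>R p j) \<le> ereal (\<Sum>j\<in>I. \<mu> j * T j)"
proof -
  have "(\<Sum>j\<in>I. \<mu> j *\<^sub>R (p j, T j)) \<in> epigraph_e \<theta>"
    using assms by (intro convex_sum) (auto simp: convex_fun_def epigraph_e_def)
  moreover have "(\<Sum>j\<in>I. \<mu> j *\<^sub>R (p j, T j)) = (\<Sum>j\<in>I. \<mu> j *\<^sub>R p j, \<Sum>j\<in>I. \<mu> j * T j)"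
    by (simp add: prod_eq_iff fst_sum snd_sum)
  ultimately show ?thesis by (simp add: epigraph_e_def)
qed

lemma le_if_le_plus_small_multiples:
  fixes X Y K :: real
  assumes "0 \<le> K" and "\<And>t. 0 < t \<Longrightarrow> t < 1 \<Longrightarrow> Y \<le> X + t * K"
  shows "Y \<le> X"
proof (rule field_le_epsilon)
  fix e :: real assume "0 < e"
  define t where "t = min (1/2) (e / (K + 1))"
  have t: "0 < t" "t < 1" using \<open>0 < e\<close> assms(1) by (auto simp: t_def)
  have "t * K \<le> e / (K + 1) * K"
    using assms(1) by (intro mult_right_mono) (auto simp: t_def)
  also have "\<dots> \<le> e" using \<open>0 < e\<close> assms(1) by (simp add: field_simps)
  finally show "Y \<le> X + e" using assms(2)[OF t] by linarith
qed

text \<open>First-order optimality for the subproblems of the method: minimising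
  \<open>\<theta> x + \<langle>a, A x - e\<rangle> + c \<parallel>A x - e\<parallel>\<^sup>2\<close> along the segment towards any \<open>x'\<close>
  and letting the step tend to zero.\<close>
lemma prox_minimizer_subdiff:
  fixes \<theta> :: "'a::euclidean_space \<Rightarrow> ereal" and A :: "'a \<Rightarrow> 'c::euclidean_space"
  assumes conv: "convex_fun \<theta>" and proper: "proper_fun \<theta>" and lin: "linear A" and c: "0 \<le> c"
    and min: "\<And>x'. \<theta> x + ereal (a \<bullet> (A x - e)) + ereal (c * (norm (A x - e))\<^sup>2)
                \<le> \<theta> x' + ereal (a \<bullet> (A x' - e)) + ereal (c * (norm (A x' - e))\<^sup>2)"
  shows "- adjoint A (a + (2 * c) *\<^sub>R (A x - e)) \<in> subdiff \<theta> x"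
proof -
  have not_MInf: "\<And>y. \<theta> y \<noteq> -\<infinity>" using proper by (simp add: proper_fun_def)
  obtain x0 where "\<theta> x0 \<noteq> \<infinity>" using proper by (auto simp: proper_fun_def)
  with min[of x0] not_MInf have "\<theta> x \<noteq> \<infinity>" by auto
  then obtain T where T: "\<theta> x = ereal T" using not_MInf[of x] by (cases "\<theta> x") auto
  define r where "r = A x - e"
  define s where "s = a + (2 * c) *\<^sub>R r"
  have "T + (- adjoint A s) \<bullet> (x' - x) \<le> T'" if T': "\<theta> x' = ereal T'" for x' T'
  proof -
    define h where "h = x' - x"
    have small: "- (s \<bullet> A h) \<le> T' - T + t * (c * (norm (A h))\<^sup>2)" if t: "0 < t" "t < 1" for t
    proof -
      have "(1 - t) *\<^sub>R x + t *\<^sub>R x' = x + t *\<^sub>R h" by (simp add: h_def algebra_simps)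
      then have convex: "\<theta> (x + t *\<^sub>R h) \<le> ereal ((1 - t) * T + t * T')"
        using convex_fun_combination_le[OF conv, of x T x' T' t] T T' t by auto
      have Ae: "A (x + t *\<^sub>R h) - e = r + t *\<^sub>R A h"
        by (simp add: r_def linear_add[OF lin] linear_scale[OF lin])
      have "ereal (T + a \<bullet> r + c * (norm r)\<^sup>2)
          \<le> \<theta> (x + t *\<^sub>R h) + ereal (a \<bullet> (r + t *\<^sub>R A h)) + ereal (c * (norm (r + t *\<^sub>R A h))\<^sup>2)"
        using min[of "x + t *\<^sub>R h", unfolded Ae] T by (simp add: r_def)
      also have "\<dots> \<le> ereal ((1 - t) * T + t * T') + ereal (a \<bullet> (r + t *\<^sub>R A h))
          + ereal (c * (norm (r + t *\<^sub>R A h))\<^sup>2)"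
        using convex by (intro add_right_mono)
      finally have "T + a \<bullet> r + c * (norm r)\<^sup>2
          \<le> (1 - t) * T + t * T' + a \<bullet> (r + t *\<^sub>R A h) + c * (norm (r + t *\<^sub>R A h))\<^sup>2"
        by simp
      moreover have "(norm (r + t *\<^sub>R A h))\<^sup>2 = (norm r)\<^sup>2 + 2 * t * (r \<bullet> A h) + t\<^sup>2 * (norm (A h))\<^sup>2"
        unfolding power2_norm_eq_inner by (simp add: inner_add inner_commute algebra_simps power2_eq_square)
      ultimately have "t * (- (s \<bullet> A h)) \<le> t * (T' - T + t * (c * (norm (A h))\<^sup>2))"
        by (simp add: s_def inner_add_left algebra_simps power2_eq_square)
      then show ?thesis using t by (simp only: mult_le_cancel_left_pos)
    qed
    have "0 \<le> c * (norm (A h))\<^sup>2" using c by simp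
    then have "- (s \<bullet> A h) \<le> T' - T" using small by (rule le_if_le_plus_small_multiples)
    moreover have "adjoint A s \<bullet> h = A h \<bullet> s"
      using adjoint_works[OF lin] by (simp add: inner_commute)
    ultimately show ?thesis by (simp add: h_def inner_commute)
  qed
  then have "\<theta> x + ereal ((- adjoint A s) \<bullet> (x' - x)) \<le> \<theta> x'" for x'
    using not_MInf[of x'] T by (cases "\<theta> x'") auto
  then show ?thesis by (simp add: subdiff_iff s_def r_def)
qed

lemma esubdiff_convex_combination:
  fixes \<theta> :: "'a::real_inner \<Rightarrow> ereal"
  assumes conv: "convex_fun \<theta>" and I: "finite I" "sum \<mu> I = 1" "\<And>j. j \<in> I \<Longrightarrow> 0 \<le> \<mu> j"
    and sub: "\<And>j. j \<in> I \<Longrightarrow> s j \<in> subdiff \<theta> (p j)"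
    and fin: "\<And>j. j \<in> I \<Longrightarrow> \<bar>\<theta> (p j)\<bar> \<noteq> \<infinity>"
  defines "pbar \<equiv> \<Sum>j\<in>I. \<mu> j *\<^sub>R p j"
  shows "(\<Sum>j\<in>I. \<mu> j *\<^sub>R s j) \<in> esubdiff (\<Sum>j\<in>I. \<mu> j * ((p j - pbar) \<bullet> s j)) \<theta> pbar"
proof -
  define T where "T j = real_of_ereal (\<theta> (p j))" for j
  have T: "\<theta> (p j) = ereal (T j)" if "j \<in> I" for j
    using fin[OF that] by (simp add: T_def ereal_real')
  have avg: "\<theta> pbar \<le> ereal (\<Sum>j\<in>I. \<mu> j * T j)"
    unfolding pbar_def using conv I T by (intro convex_fun_sum_le) auto
  have "\<theta> pbar + ereal ((\<Sum>j\<in>I. \<mu> j *\<^sub>R s j) \<bullet> (x - pbar) - (\<Sum>j\<in>I. \<mu> j * ((p j - pbar) \<bullet> s j)))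
      \<le> \<theta> x" for x
  proof (cases "\<theta> x")
    case (real X)
    have "T j + s j \<bullet> (x - p j) \<le> X" if "j \<in> I" for j
    proof -
      have "ereal (T j + s j \<bullet> (x - p j)) \<le> \<theta> x"
        using sub[OF that] T[OF that] by (simp add: subdiff_iff)
      with real show ?thesis by simp
    qed
    then have "(\<Sum>j\<in>I. \<mu> j * (T j + s j \<bullet> (x - p j))) \<le> (\<Sum>j\<in>I. \<mu> j * X)"
      using I(3) by (intro sum_mono mult_left_mono) auto
    also have "\<dots> = X" using I(2) by (simp add: sum_distrib_right[symmetric])
    finally have bound: "(\<Sum>j\<in>I. \<mu> j * T j) + (\<Sum>j\<in>I. \<mu> j * (s j \<bullet> (x - p j))) \<le> X"
      by (simp add: distrib_left sum.distrib)
    have "(\<Sum>j\<in>I. \<mu> j *\<^sub>R s j) \<bullet> (x - pbar) = (\<Sum>j\<in>I. \<mu> j * (s j \<bullet> (x - pbar)))"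
      by (simp add: inner_sum_left)
    then have error: "(\<Sum>j\<in>I. \<mu> j *\<^sub>R s j) \<bullet> (x - pbar) - (\<Sum>j\<in>I. \<mu> j * ((p j - pbar) \<bullet> s j))
        = (\<Sum>j\<in>I. \<mu> j * (s j \<bullet> (x - p j)))"
      by (simp add: sum_subtractf[symmetric] inner_diff inner_commute algebra_simps)
    have "\<theta> pbar + ereal (\<Sum>j\<in>I. \<mu> j * (s j \<bullet> (x - p j)))
        \<le> ereal (\<Sum>j\<in>I. \<mu> j * T j) + ereal (\<Sum>j\<in>I. \<mu> j * (s j \<bullet> (x - p j)))"
      using avg by (rule add_right_mono)
    also have "\<dots> \<le> \<theta> x" using bound real by simp
    finally show ?thesis unfolding error .
  next
    case MInf
    obtain j where j: "j \<in> I" using I(2) by fastforce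
    have "ereal (T j + s j \<bullet> (x - p j)) \<le> \<theta> x"
      using sub[OF j] T[OF j] by (simp add: subdiff_iff)
    with MInf show ?thesis by simp
  qed simp
  then show ?thesis by (simp add: esubdiff_def)
qed

section \<open>One step of the method\<close>

lemma pmm_stepsize_lower_bound:
  fixes b c :: "'c::real_inner" and lam :: real
  assumes lam: "0 < lam" and nz: "b \<noteq> 0 \<or> c \<noteq> 0"
  shows "min lam (1 / lam) / 2 \<le> lam * ((norm (b - c))\<^sup>2 + b \<bullet> c) / ((norm b)\<^sup>2 + lam\<^sup>2 * (norm c)\<^sup>2)"
proof -
  define tau where "tau = min lam (1 / lam)"
  define D where "D = (norm b)\<^sup>2 + lam\<^sup>2 * (norm c)\<^sup>2"
  have D: "0 < D" using nz lam by (auto simp: D_def intro: add_pos_nonneg add_nonneg_pos)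
  have "2 * ((norm (b - c))\<^sup>2 + b \<bullet> c) = (norm b)\<^sup>2 + (norm c)\<^sup>2 + (norm (b - c))\<^sup>2"
    unfolding power2_norm_eq_inner by (simp add: inner_diff inner_commute algebra_simps)
  then have N: "(norm b)\<^sup>2 + (norm c)\<^sup>2 \<le> 2 * ((norm (b - c))\<^sup>2 + b \<bullet> c)"
    using zero_le_power2[of "norm (b - c)"] by linarith
  have "tau * (norm b)\<^sup>2 \<le> lam * (norm b)\<^sup>2" by (intro mult_right_mono) (simp_all add: tau_def)
  moreover have "tau * (lam\<^sup>2 * (norm c)\<^sup>2) \<le> lam * (norm c)\<^sup>2"
  proof -
    have "tau * (lam\<^sup>2 * (norm c)\<^sup>2) = lam * ((tau * lam) * (norm c)\<^sup>2)"
      by (simp add: power2_eq_square)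
    also have "\<dots> \<le> lam * (norm c)\<^sup>2"
      using lam by (intro mult_left_mono mult_left_le_one_le) (auto simp: tau_def min_def field_simps)
    finally show ?thesis .
  qed
  ultimately have "tau * D \<le> lam * ((norm b)\<^sup>2 + (norm c)\<^sup>2)"
    by (simp add: D_def distrib_left)
  also have "\<dots> \<le> lam * (2 * ((norm (b - c))\<^sup>2 + b \<bullet> c))" using N lam by (intro mult_left_mono) auto
  finally show ?thesis using D by (simp add: tau_def D_def[symmetric] field_simps)
qed

text \<open>One step of the method, written with the residuals \<open>b = M u + C v - d\<close> and
  \<open>c = M u - w\<close>: then \<open>x = z + \<lambda>(b - c)\<close>, \<open>y = z + \<lambda>b\<close> and \<open>M u = w + c\<close>.
  The step size makes the right-hand side exceed the left by
  \<open>\<rho>(2 - \<rho>)\<gamma>\<^sup>2(\<parallel>b\<parallel>\<^sup>2 + \<lambda>\<^sup>2\<parallel>c\<parallel>\<^sup>2) \<ge> 0\<close>.\<close>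
lemma pmm_step_descent:
  fixes z w b c qz qw :: "'c::real_inner" and lam gam rho :: real
  assumes rho: "0 \<le> rho" "rho \<le> 2" and gam: "0 \<le> gam"
    and gam_eq: "gam * ((norm b)\<^sup>2 + lam\<^sup>2 * (norm c)\<^sup>2) = lam * ((norm (b - c))\<^sup>2 + b \<bullet> c)"
  shows "2 * (rho * gam) * ((qz - (z + lam *\<^sub>R b)) \<bullet> (w + c - qw)
             + (qz - (z + lam *\<^sub>R (b - c))) \<bullet> (qw - (w + c) + b))
         \<le> (norm (qz - z))\<^sup>2 + (norm (qw - w))\<^sup>2
           - (norm (qz - (z + (rho * gam) *\<^sub>R b)))\<^sup>2 - (norm (qw - (w + (rho * gam * lam) *\<^sub>R c)))\<^sup>2"
proof -
  define a where "a = rho * gam"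
  define D where "D = (norm b)\<^sup>2 + lam\<^sup>2 * (norm c)\<^sup>2"
  define N where "N = (norm (b - c))\<^sup>2 + b \<bullet> c"
  have "(norm (qz - z))\<^sup>2 + (norm (qw - w))\<^sup>2
          - (norm (qz - (z + a *\<^sub>R b)))\<^sup>2 - (norm (qw - (w + (a * lam) *\<^sub>R c)))\<^sup>2
          - 2 * a * ((qz - (z + lam *\<^sub>R b)) \<bullet> (w + c - qw)
                     + (qz - (z + lam *\<^sub>R (b - c))) \<bullet> (qw - (w + c) + b))
        = 2 * a * lam * N - a\<^sup>2 * D"
    unfolding D_def N_def power2_norm_eq_inner
    by (simp add: inner_diff inner_add inner_commute algebra_simps power2_eq_square)
  also have "\<dots> = 2 * a * (gam * D) - a\<^sup>2 * D"
    using gam_eq by (simp add: D_def N_def)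
  also have "\<dots> = rho * (2 - rho) * gam * (gam * D)"
    by (simp add: a_def power2_eq_square algebra_simps)
  also have "\<dots> \<ge> 0" using rho gam by (simp add: D_def)
  finally show ?thesis by (simp add: a_def)
qed

lemma pmm_point_bound:
  fixes z w b c zs ws :: "'c::real_inner" and lam :: real
  assumes lam: "0 < lam"
    and mono_x: "0 \<le> (zs - (z + lam *\<^sub>R (b - c))) \<bullet> (ws - (w + c) + b)"
    and mono_y: "0 \<le> (zs - (z + lam *\<^sub>R b)) \<bullet> (w + c - ws)"
  shows "(norm (z + lam *\<^sub>R (b - c) - zs))\<^sup>2 + (norm (w + c - ws))\<^sup>2
         \<le> (5 + lam\<^sup>2 + 1 / lam\<^sup>2) * ((norm (z - zs))\<^sup>2 + (norm (w - ws))\<^sup>2)"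
proof -
  define s where "s = z - zs"
  define t where "t = w - ws"
  define X where "X = z + lam *\<^sub>R (b - c) - zs"
  define U where "U = w + c - ws"
  text \<open>Both estimates have the form \<open>\<parallel>P\<parallel> \<le> \<parallel>P - \<lambda>Q\<parallel>\<close> with \<open>P \<bullet> Q \<le> 0\<close>.\<close>
  have obtuse: "norm P \<le> norm (P - lam *\<^sub>R Q)" "lam * norm Q \<le> norm (P - lam *\<^sub>R Q)"
    if "P \<bullet> Q \<le> 0" for P Q :: 'c
  proof -
    have "(norm (P - lam *\<^sub>R Q))\<^sup>2 = (norm P)\<^sup>2 - 2 * lam * (P \<bullet> Q) + (lam * norm Q)\<^sup>2"
      unfolding power2_norm_eq_inner power_mult_distrib
      by (simp add: inner_diff inner_commute power2_eq_square algebra_simps)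
    moreover have "lam * (P \<bullet> Q) \<le> 0" using that lam by (simp add: mult_nonneg_nonpos)
    ultimately have "(norm P)\<^sup>2 \<le> (norm (P - lam *\<^sub>R Q))\<^sup>2" "(lam * norm Q)\<^sup>2 \<le> (norm (P - lam *\<^sub>R Q))\<^sup>2"
      using zero_le_power2[of "norm P"] zero_le_power2[of "lam * norm Q"] by linarith+
    then show "norm P \<le> norm (P - lam *\<^sub>R Q)" "lam * norm Q \<le> norm (P - lam *\<^sub>R Q)"
      by (auto intro: power2_le_imp_le)
  qed
  have "X \<bullet> (ws - (w + c) + b) \<le> 0" using mono_x by (simp add: X_def inner_diff_left)
  from obtuse(1)[OF this] have "norm X \<le> norm (s + lam *\<^sub>R t)"
    by (simp add: X_def s_def t_def algebra_simps)
  also have "\<dots> \<le> norm s + lam * norm t" using norm_triangle_ineq[of s "lam *\<^sub>R t"] lam by simp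
  finally have nX: "norm X \<le> norm s + lam * norm t" .
  have "X - lam *\<^sub>R t + lam *\<^sub>R U = z + lam *\<^sub>R b - zs"
    by (simp add: X_def U_def t_def algebra_simps)
  then have "(X - lam *\<^sub>R t + lam *\<^sub>R U) \<bullet> U \<le> 0" using mono_y by (simp add: U_def inner_diff_left)
  from obtuse(2)[OF this] have "lam * norm U \<le> norm (X - lam *\<^sub>R t)"
    by (simp add: U_def t_def algebra_simps)
  also have "\<dots> \<le> norm X + lam * norm t" using norm_triangle_ineq4[of X "lam *\<^sub>R t"] lam by simp
  finally have "norm U \<le> norm s / lam + 2 * norm t" using nX lam by (simp add: field_simps)
  then have "(norm U)\<^sup>2 \<le> (norm s / lam + 2 * norm t)\<^sup>2" by (simp add: power_mono)
  also have "\<dots> \<le> (1 / lam\<^sup>2 + 4) * ((norm s)\<^sup>2 + (norm t)\<^sup>2)"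
  proof -
    have "(1 / lam\<^sup>2 + 4) * ((norm s)\<^sup>2 + (norm t)\<^sup>2) - (norm s / lam + 2 * norm t)\<^sup>2
        = (2 * norm s - norm t / lam)\<^sup>2"
      using lam by (simp add: power2_eq_square field_simps)
    then show ?thesis using zero_le_power2[of "2 * norm s - norm t / lam"] by linarith
  qed
  finally have U2: "(norm U)\<^sup>2 \<le> (1 / lam\<^sup>2 + 4) * ((norm s)\<^sup>2 + (norm t)\<^sup>2)" .
  have "(norm X)\<^sup>2 \<le> (norm s + lam * norm t)\<^sup>2" using nX by (simp add: power_mono)
  also have "\<dots> \<le> (1 + lam\<^sup>2) * ((norm s)\<^sup>2 + (norm t)\<^sup>2)"
    using zero_le_power2[of "lam * norm s - norm t"] by (simp add: power2_eq_square algebra_simps)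
  finally show ?thesis using U2 by (simp add: X_def U_def s_def t_def algebra_simps)
qed

section \<open>Distances to a set and weighted sums\<close>

lemma le_infdist:
  assumes "A \<noteq> {}" and "\<And>a. a \<in> A \<Longrightarrow> X \<le> dist p a"
  shows "X \<le> infdist p A"
  unfolding infdist_notempty[OF assms(1)] by (rule cINF_greatest) (use assms in auto)

lemma le_infdist_power2:
  assumes "A \<noteq> {}" and "0 < c" and "\<And>a. a \<in> A \<Longrightarrow> X \<le> c * (dist p a)\<^sup>2"
  shows "X \<le> c * (infdist p A)\<^sup>2"
proof (cases "X \<le> 0")
  case True
  then show ?thesis using assms(2) by (smt (verit) mult_nonneg_nonneg zero_le_power2)
next
  case False
  have "sqrt (X / c) \<le> infdist p A"
  proof (rule le_infdist[OF assms(1)])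
    fix a assume "a \<in> A"
    then have "X / c \<le> (dist p a)\<^sup>2" using assms(2,3) by (simp add: field_simps)
    then show "sqrt (X / c) \<le> dist p a" using real_sqrt_le_mono by fastforce
  qed
  then have "(sqrt (X / c))\<^sup>2 \<le> (infdist p A)\<^sup>2" using False assms(2) by (intro power_mono) auto
  then show ?thesis using False assms(2) by (simp add: field_simps)
qed

lemma weighted_gap_sum_eq:
  fixes a :: "nat \<Rightarrow> real" and x y m q :: "nat \<Rightarrow> 'c::real_inner"
  assumes "G = sum a I" "G \<noteq> 0"
    and "x_av = (1 / G) *\<^sub>R (\<Sum>j\<in>I. a j *\<^sub>R x j)"
    and "m_av = (1 / G) *\<^sub>R (\<Sum>j\<in>I. a j *\<^sub>R m j)"
    and "q_av = (1 / G) *\<^sub>R (\<Sum>j\<in>I. a j *\<^sub>R q j)"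
  shows "(\<Sum>j\<in>I. a j * ((x_av - y j) \<bullet> (m j - m_av) + (x_av - x j) \<bullet> (m_av + (q j - d))))
       = (\<Sum>j\<in>I. a j * ((m_av - m j) \<bullet> y j + (q_av - q j) \<bullet> x j))"
proof -
  have sums: "(\<Sum>j\<in>I. a j *\<^sub>R x j) = G *\<^sub>R x_av" "(\<Sum>j\<in>I. a j *\<^sub>R m j) = G *\<^sub>R m_av"
    "(\<Sum>j\<in>I. a j *\<^sub>R q j) = G *\<^sub>R q_av"
    using assms by simp_all
  have "(x_av - y j) \<bullet> (m j - m_av) + (x_av - x j) \<bullet> (m_av + (q j - d))
          - ((m_av - m j) \<bullet> y j + (q_av - q j) \<bullet> x j)
        = x_av \<bullet> m j + x_av \<bullet> q j - x_av \<bullet> d - x j \<bullet> m_av + x j \<bullet> d - q_av \<bullet> x j" for j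
    by (simp add: inner_diff inner_add inner_commute algebra_simps)
  then have "(\<Sum>j\<in>I. a j * ((x_av - y j) \<bullet> (m j - m_av) + (x_av - x j) \<bullet> (m_av + (q j - d))))
       - (\<Sum>j\<in>I. a j * ((m_av - m j) \<bullet> y j + (q_av - q j) \<bullet> x j))
     = (\<Sum>j\<in>I. a j * (x_av \<bullet> m j + x_av \<bullet> q j - x_av \<bullet> d - x j \<bullet> m_av + x j \<bullet> d - q_av \<bullet> x j))"
    by (simp add: sum_subtractf[symmetric] right_diff_distrib[symmetric])
  also have "\<dots> = x_av \<bullet> (\<Sum>j\<in>I. a j *\<^sub>R m j) + x_av \<bullet> (\<Sum>j\<in>I. a j *\<^sub>R q j) - sum a I * (x_av \<bullet> d)
       - (\<Sum>j\<in>I. a j *\<^sub>R x j) \<bullet> m_av + (\<Sum>j\<in>I. a j *\<^sub>R x j) \<bullet> d - q_av \<bullet> (\<Sum>j\<in>I. a j *\<^sub>R x j)"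
    by (simp add: inner_sum_left inner_sum_right sum.distrib sum_subtractf algebra_simps sum_distrib_right)
  also have "\<dots> = 0" unfolding sums assms(1)[symmetric] by (simp add: inner_commute algebra_simps)
  finally show ?thesis by simp
qed

section \<open>The iterates of the method\<close>

locale pmm =
  fixes f :: "'a::euclidean_space \<Rightarrow> ereal" and g :: "'b::euclidean_space \<Rightarrow> ereal"
    and M :: "'a \<Rightarrow> 'c::euclidean_space" and C :: "'b \<Rightarrow> 'c" and d :: 'c
    and lam rhobar :: real
    and u :: "nat \<Rightarrow> 'a" and v :: "nat \<Rightarrow> 'b" and z w :: "nat \<Rightarrow> 'c"
    and gam rho :: "nat \<Rightarrow> real"
  assumes convex_f: "convex_fun f" and proper_f: "proper_fun f"
    and convex_g: "convex_fun g" and proper_g: "proper_fun g"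
    and linear_M: "linear M" and linear_C: "linear C"
    and run: "pmm_run f g M C d lam rhobar u v z w gam rho"
begin

abbreviation sol :: "('c \<times> 'c) set" where
  "sol \<equiv> Se (h1 f M) (h2 g C d)"

definition x_seq :: "nat \<Rightarrow> 'c" where
  "x_seq k = z (k - 1) + lam *\<^sub>R w (k - 1) + lam *\<^sub>R (C (v k) - d)"

definition y_seq :: "nat \<Rightarrow> 'c" where
  "y_seq k = x_seq k - lam *\<^sub>R (w (k - 1) - M (u k))"

definition feas_res :: "nat \<Rightarrow> 'c" where
  "feas_res k = M (u k) + C (v k) - d"

definition w_res :: "nat \<Rightarrow> 'c" where
  "w_res k = M (u k) - w (k - 1)"

definition weight :: "nat \<Rightarrow> real" where
  "weight k = rho k * gam k"

definition weight_sum :: "nat \<Rightarrow> real" where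
  "weight_sum k = (\<Sum>j=1..k. weight j)"

definition ergodic :: "(nat \<Rightarrow> 'e::real_vector) \<Rightarrow> nat \<Rightarrow> 'e" where
  "ergodic p k = (1 / weight_sum k) *\<^sub>R (\<Sum>j=1..k. weight j *\<^sub>R p j)"

definition eps_f :: "nat \<Rightarrow> real" where
  "eps_f k = (1 / weight_sum k) * (\<Sum>j=1..k. weight j * ((u j - ergodic u k) \<bullet> (- adjoint M (y_seq j))))"

definition eps_g :: "nat \<Rightarrow> real" where
  "eps_g k = (1 / weight_sum k) * (\<Sum>j=1..k. weight j * ((v j - ergodic v k) \<bullet> (- adjoint C (x_seq j))))"

definition gap :: "nat \<Rightarrow> 'c \<Rightarrow> 'c \<Rightarrow> real" where
  "gap k qz qw = (qz - y_seq k) \<bullet> (M (u k) - qw) + (qz - x_seq k) \<bullet> (qw + (C (v k) - d))"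

definition tau :: real where
  "tau = min lam (1 / lam)"

lemma lam_pos: "0 < lam" and rhobar: "0 \<le> rhobar" "rhobar < 1"
  using run by (auto simp: pmm_run_def)

lemma tau_pos: "0 < tau"
  using lam_pos by (simp add: tau_def)

lemma tau_le_1: "tau \<le> 1"
  unfolding tau_def using lam_pos by (cases "lam \<le> 1") (auto simp: min_le_iff_disj)

context
  fixes j :: nat
  assumes j: "1 \<le> j"
begin

lemma v_argmin:
  "g (v j) + ereal ((z (j-1) + lam *\<^sub>R w (j-1)) \<bullet> (C (v j) - d)) + ereal (lam / 2 * (norm (C (v j) - d))\<^sup>2)
     \<le> g v' + ereal ((z (j-1) + lam *\<^sub>R w (j-1)) \<bullet> (C v' - d)) + ereal (lam / 2 * (norm (C v' - d))\<^sup>2)"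
  using run j unfolding pmm_run_def by blast

text \<open>Stated with \<open>M u - 0\<close> to match the shape \<open>A u - e\<close> of the subproblems.\<close>
lemma u_argmin:
  "f (u j) + ereal ((z (j-1) + lam *\<^sub>R (C (v j) - d)) \<bullet> (M (u j) - 0)) + ereal (lam / 2 * (norm (M (u j) - 0))\<^sup>2)
     \<le> f u' + ereal ((z (j-1) + lam *\<^sub>R (C (v j) - d)) \<bullet> (M u' - 0)) + ereal (lam / 2 * (norm (M u' - 0))\<^sup>2)"
  using run j unfolding pmm_run_def by auto

lemma rho_bounds: "1 - rhobar \<le> rho j" "rho j \<le> 1 + rhobar"
  using run j unfolding pmm_run_def by auto

lemma z_update: "z j = z (j - 1) + weight j *\<^sub>R feas_res j"
  using run j unfolding pmm_run_def weight_def feas_res_def by auto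

lemma w_update: "w j = w (j - 1) + (weight j * lam) *\<^sub>R w_res j"
proof -
  have "w j = w (j - 1) - (weight j * lam) *\<^sub>R (w (j - 1) - M (u j))"
    using run j unfolding pmm_run_def weight_def by auto
  then show ?thesis by (simp add: w_res_def algebra_simps)
qed

lemma residuals_nonzero: "feas_res j \<noteq> 0 \<or> w_res j \<noteq> 0"
  using run j unfolding pmm_run_def feas_res_def w_res_def by auto

lemma gam_eq:
  "gam j = lam * ((norm (feas_res j - w_res j))\<^sup>2 + feas_res j \<bullet> w_res j)
           / ((norm (feas_res j))\<^sup>2 + lam\<^sup>2 * (norm (w_res j))\<^sup>2)"
proof -
  have "gam j = (lam * (norm (C (v j) - d + w (j-1)))\<^sup>2
               + lam * ((d - C (v j) - M (u j)) \<bullet> (w (j-1) - M (u j))))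
             / ((norm (M (u j) + C (v j) - d))\<^sup>2 + lam\<^sup>2 * (norm (M (u j) - w (j-1)))\<^sup>2)"
    using run j unfolding pmm_run_def by blast
  moreover have "C (v j) - d + w (j-1) = feas_res j - w_res j" "M (u j) - w (j-1) = w_res j"
    "d - C (v j) - M (u j) = - feas_res j" "w (j-1) - M (u j) = - w_res j"
    by (simp_all add: feas_res_def w_res_def algebra_simps)
  ultimately show ?thesis by (simp add: feas_res_def[symmetric] distrib_left)
qed

lemma gam_mult_eq:
  "gam j * ((norm (feas_res j))\<^sup>2 + lam\<^sup>2 * (norm (w_res j))\<^sup>2)
     = lam * ((norm (feas_res j - w_res j))\<^sup>2 + feas_res j \<bullet> w_res j)"
proof -
  have "0 < (norm (feas_res j))\<^sup>2 + lam\<^sup>2 * (norm (w_res j))\<^sup>2"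
    using residuals_nonzero lam_pos by (auto intro: add_pos_nonneg add_nonneg_pos)
  then show ?thesis by (simp add: gam_eq)
qed

lemma weight_lower: "(1 - rhobar) * tau / 2 \<le> weight j"
proof -
  have "tau / 2 \<le> gam j"
    unfolding gam_eq tau_def using pmm_stepsize_lower_bound[OF lam_pos residuals_nonzero] .
  then have "(1 - rhobar) * (tau / 2) \<le> rho j * gam j"
    using rho_bounds rhobar tau_pos by (intro mult_mono) auto
  then show ?thesis by (simp add: weight_def)
qed

lemma weight_pos: "0 < weight j"
proof -
  have "0 < (1 - rhobar) * tau / 2" using rhobar tau_pos by simp
  then show ?thesis using weight_lower by linarith
qed

lemma x_seq_eq: "x_seq j = z (j - 1) + lam *\<^sub>R (feas_res j - w_res j)"
  by (simp add: x_seq_def feas_res_def w_res_def algebra_simps)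

lemma y_seq_eq: "y_seq j = z (j - 1) + lam *\<^sub>R feas_res j"
  by (simp add: y_seq_def x_seq_def feas_res_def algebra_simps)

end

lemma subdiff_g_v:
  assumes "1 \<le> j"
  shows "- adjoint C (x_seq j) \<in> subdiff g (v j)"
proof -
  have "z (j-1) + lam *\<^sub>R w (j-1) + (2 * (lam / 2)) *\<^sub>R (C (v j) - d) = x_seq j"
    by (simp add: x_seq_def)
  with prox_minimizer_subdiff[OF convex_g proper_g linear_C _ v_argmin[OF assms]] lam_pos
  show ?thesis by simp
qed

lemma subdiff_f_u:
  assumes "1 \<le> j"
  shows "- adjoint M (y_seq j) \<in> subdiff f (u j)"
proof -
  have "z (j-1) + lam *\<^sub>R (C (v j) - d) + (2 * (lam / 2)) *\<^sub>R (M (u j) - 0) = y_seq j"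
    by (simp add: y_seq_def x_seq_def algebra_simps)
  with prox_minimizer_subdiff[OF convex_f proper_f linear_M _ u_argmin[OF assms]] lam_pos
  show ?thesis by simp
qed

text \<open>Monotonicity of \<open>\<partial>h\<^sub>1\<close> and \<open>\<partial>h\<^sub>2\<close>: the iterates provide
  \<open>-M u\<^sub>j \<in> \<partial>h\<^sub>1(y\<^sub>j)\<close> and \<open>d - C v\<^sub>j \<in> \<partial>h\<^sub>2(x\<^sub>j)\<close>.\<close>
lemma sol_monotone:
  assumes "(zs, ws) \<in> sol" and "1 \<le> j"
  shows "0 \<le> (zs - y_seq j) \<bullet> (M (u j) - ws)" and "0 \<le> (zs - x_seq j) \<bullet> (ws + (C (v j) - d))"
proof -
  have ws: "- ws \<in> subdiff (h1 f M) zs" "ws \<in> subdiff (h2 g C d) zs"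
    using assms(1) by (auto simp: Se_def)
  note f_u = subdiff_f_u[OF assms(2)] and g_v = subdiff_g_v[OF assms(2)]
  note h1 = subdiff_h1[OF linear_M f_u subdiff_finite[OF proper_f f_u]]
  have "0 \<le> (- M (u j) - - ws) \<bullet> (y_seq j - zs)"
    by (rule subdiff_monotone[OF h1(1) ws(1) h1(2)])
  then show "0 \<le> (zs - y_seq j) \<bullet> (M (u j) - ws)"
    by (simp add: inner_diff inner_commute algebra_simps)
  note h2 = subdiff_h2[OF linear_C g_v subdiff_finite[OF proper_g g_v], of d]
  have "0 \<le> (d - C (v j) - ws) \<bullet> (x_seq j - zs)"
    by (rule subdiff_monotone[OF h2(1) ws(2) h2(2)])
  then show "0 \<le> (zs - x_seq j) \<bullet> (ws + (C (v j) - d))"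
    by (simp add: inner_diff inner_commute algebra_simps)
qed

lemma gap_nonneg: "(zs, ws) \<in> sol \<Longrightarrow> 1 \<le> j \<Longrightarrow> 0 \<le> gap j zs ws"
  using sol_monotone by (simp add: gap_def)

lemma M_u_eq: "M (u j) = w (j - 1) + w_res j"
  by (simp add: w_res_def)

lemma C_v_minus_d_eq: "C (v j) - d = feas_res j - (w (j - 1) + w_res j)"
  by (simp add: feas_res_def w_res_def)

lemma dist_descent:
  assumes "1 \<le> j"
  shows "2 * weight j * gap j qz qw
         \<le> (dist (z (j - 1), w (j - 1)) (qz, qw))\<^sup>2 - (dist (z j, w j) (qz, qw))\<^sup>2"
proof -
  have "0 \<le> rho j" "rho j \<le> 2" "0 \<le> gam j"
    using rho_bounds[OF assms] rhobar weight_pos[OF assms] by (auto simp: weight_def zero_less_mult_iff)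
  note descent = pmm_step_descent[OF this gam_mult_eq[OF assms], of qz "z (j - 1)" "w (j - 1)" qw]
  have "gap j qz qw = (qz - (z (j - 1) + lam *\<^sub>R feas_res j)) \<bullet> (w (j - 1) + w_res j - qw)
      + (qz - (z (j - 1) + lam *\<^sub>R (feas_res j - w_res j))) \<bullet> (qw - (w (j - 1) + w_res j) + feas_res j)"
    unfolding gap_def x_seq_eq[OF assms] y_seq_eq[OF assms] C_v_minus_d_eq M_u_eq
    by (simp add: algebra_simps)
  then have "2 * weight j * gap j qz qw
      \<le> (norm (qz - z (j - 1)))\<^sup>2 + (norm (qw - w (j - 1)))\<^sup>2 - (norm (qz - z j))\<^sup>2 - (norm (qw - w j))\<^sup>2"
    unfolding z_update[OF assms] w_update[OF assms] weight_def using descent by simp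
  then show ?thesis by (simp add: dist_norm norm_Pair norm_minus_commute)
qed

lemma fejer_monotone:
  assumes "p \<in> sol"
  shows "dist (z j, w j) p \<le> dist (z 0, w 0) p"
proof (induction j)
  case (Suc j)
  obtain zs ws where p: "p = (zs, ws)" by force
  have "0 \<le> 2 * weight (Suc j) * gap (Suc j) zs ws"
    using gap_nonneg[of zs ws "Suc j"] weight_pos[of "Suc j"] assms p by simp
  with dist_descent[of "Suc j" zs ws, simplified]
  have "(dist (z (Suc j), w (Suc j)) (zs, ws))\<^sup>2 \<le> (dist (z j, w j) (zs, ws))\<^sup>2"
    by linarith
  then have "dist (z (Suc j), w (Suc j)) p \<le> dist (z j, w j) p"
    unfolding p by (rule power2_le_imp_le) simp
  with Suc show ?case by simp
qed simp

lemma weighted_gap_sum_le: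
  "2 * (\<Sum>j=1..k. weight j * gap j qz qw) \<le> (dist (z 0, w 0) (qz, qw))\<^sup>2"
proof -
  let ?D = "\<lambda>j. (dist (z j, w j) (qz, qw))\<^sup>2"
  have "2 * (\<Sum>j=1..k. weight j * gap j qz qw) = (\<Sum>j=1..k. 2 * weight j * gap j qz qw)"
    by (simp add: sum_distrib_left mult.assoc)
  also have "\<dots> \<le> (\<Sum>j=1..k. ?D (j - 1) - ?D j)"
    by (intro sum_mono dist_descent) simp
  also have "\<dots> = ?D 0 - ?D k"
    using sum_telescope''[of 0 k "\<lambda>j. - ?D j"] by (simp add: sum_negf)
  finally show ?thesis using zero_le_power2[of "dist (z k, w k) (qz, qw)"] by linarith
qed

lemma iterate_dist_bound:
  assumes "p \<in> sol" and "1 \<le> j"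
  shows "dist (x_seq j, M (u j)) p \<le> sqrt (5 + lam\<^sup>2 + 1 / lam\<^sup>2) * dist (z 0, w 0) p"
proof -
  obtain zs ws where p: "p = (zs, ws)" by force
  let ?K = "5 + lam\<^sup>2 + 1 / lam\<^sup>2"
  note mono = sol_monotone[OF assms(1)[unfolded p] assms(2),
      unfolded x_seq_eq[OF assms(2)] y_seq_eq[OF assms(2)] C_v_minus_d_eq M_u_eq]
  have "(dist (x_seq j, M (u j)) p)\<^sup>2
      = (norm (z (j - 1) + lam *\<^sub>R (feas_res j - w_res j) - zs))\<^sup>2 + (norm (w (j - 1) + w_res j - ws))\<^sup>2"
    by (simp add: p dist_norm norm_Pair x_seq_eq[OF assms(2)] M_u_eq)
  also have "\<dots> \<le> ?K * ((norm (z (j - 1) - zs))\<^sup>2 + (norm (w (j - 1) - ws))\<^sup>2)"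
    using mono by (intro pmm_point_bound[OF lam_pos]) (simp_all add: algebra_simps)
  also have "\<dots> = ?K * (dist (z (j - 1), w (j - 1)) p)\<^sup>2"
    by (simp add: p dist_norm norm_Pair)
  also have "\<dots> \<le> ?K * (dist (z 0, w 0) p)\<^sup>2"
    using fejer_monotone[OF assms(1)] by (intro mult_left_mono power_mono) auto
  also have "\<dots> = (sqrt ?K * dist (z 0, w 0) p)\<^sup>2"
    by (simp add: power_mult_distrib)
  finally show ?thesis by (rule power2_le_imp_le) simp
qed

section \<open>Ergodic averages\<close>

lemma weight_sum_lower: "real k * ((1 - rhobar) * tau / 2) \<le> weight_sum k"
proof -
  have "real k * ((1 - rhobar) * tau / 2) = (\<Sum>j=1..k. (1 - rhobar) * tau / 2)" by simp
  also have "\<dots> \<le> weight_sum k" unfolding weight_sum_def by (intro sum_mono weight_lower) simp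
  finally show ?thesis .
qed

lemma inverse_weight_sum_le:
  assumes "1 \<le> k"
  shows "0 < weight_sum k" and "1 / weight_sum k \<le> 2 / (real k * (1 - rhobar) * tau)"
proof -
  have pos: "0 < real k * (1 - rhobar) * tau" using assms rhobar tau_pos by simp
  then show "0 < weight_sum k" using weight_sum_lower[of k] by simp
  then show "1 / weight_sum k \<le> 2 / (real k * (1 - rhobar) * tau)"
    using weight_sum_lower[of k] pos by (simp add: field_simps)
qed

lemma ergodic_eq_sum: "ergodic p k = (\<Sum>j=1..k. (weight j / weight_sum k) *\<^sub>R p j)"
  by (simp add: ergodic_def scaleR_sum_right)

lemma ergodic_weights:
  assumes "1 \<le> k"
  shows "(\<Sum>j=1..k. weight j / weight_sum k) = 1" and "j \<in> {1..k} \<Longrightarrow> 0 \<le> weight j / weight_sum k"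
  using inverse_weight_sum_le(1)[OF assms] weight_pos
  by (auto simp: weight_sum_def sum_divide_distrib[symmetric] less_imp_le)

lemma linear_ergodic: "linear L \<Longrightarrow> L (ergodic p k) = ergodic (\<lambda>j. L (p j)) k"
  by (simp add: ergodic_def linear_sum linear_scale)

lemma ergodic_diff: "ergodic p k - ergodic q k = ergodic (\<lambda>j. p j - q j) k"
  by (simp add: ergodic_def sum_subtractf scaleR_diff_right)

lemma ergodic_Pair: "ergodic (\<lambda>j. (p j, q j)) k = (ergodic p k, ergodic q k)"
  by (simp add: ergodic_def prod_eq_iff fst_sum snd_sum)

lemma ergodic_const: "1 \<le> k \<Longrightarrow> ergodic (\<lambda>j. a) k = a"
  using ergodic_weights(1) by (simp add: ergodic_eq_sum scaleR_sum_left[symmetric])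

lemma ergodic_in_convex:
  assumes "1 \<le> k" and "convex A" and "\<And>j. 1 \<le> j \<Longrightarrow> p j \<in> A"
  shows "ergodic p k \<in> A"
  unfolding ergodic_eq_sum using assms ergodic_weights[OF assms(1)] by (intro convex_sum) auto

lemma ergodic_esubdiff:
  assumes "convex_fun \<theta>" "proper_fun \<theta>" "1 \<le> k" "\<And>j. 1 \<le> j \<Longrightarrow> s j \<in> subdiff \<theta> (p j)"
  shows "ergodic s k
    \<in> esubdiff ((1 / weight_sum k) * (\<Sum>j=1..k. weight j * ((p j - ergodic p k) \<bullet> s j))) \<theta> (ergodic p k)"
proof -
  have "(\<Sum>j=1..k. (weight j / weight_sum k) *\<^sub>R s j)
     \<in> esubdiff (\<Sum>j=1..k. weight j / weight_sum k * ((p j - ergodic p k) \<bullet> s j)) \<theta> (ergodic p k)"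
    unfolding ergodic_eq_sum[of p]
    using assms(4) subdiff_finite[OF assms(2) assms(4)]
    by (intro esubdiff_convex_combination[OF assms(1) finite_atLeastAtMost ergodic_weights[OF assms(3)]])
      auto
  then show ?thesis by (simp add: ergodic_eq_sum sum_distrib_left)
qed

lemma ergodic_subdiff_g:
  "1 \<le> k \<Longrightarrow> - adjoint C (ergodic x_seq k) \<in> esubdiff (eps_g k) g (ergodic v k)"
  using ergodic_esubdiff[where s="\<lambda>j. - adjoint C (x_seq j)" and p=v, OF convex_g proper_g _ subdiff_g_v]
  by (simp add: eps_g_def linear_ergodic[OF linear_neg_adjoint[OF linear_C]])

lemma ergodic_subdiff_f:
  "1 \<le> k \<Longrightarrow> - adjoint M (ergodic y_seq k) \<in> esubdiff (eps_f k) f (ergodic u k)"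
  using ergodic_esubdiff[where s="\<lambda>j. - adjoint M (y_seq j)" and p=u, OF convex_f proper_f _ subdiff_f_u]
  by (simp add: eps_f_def linear_ergodic[OF linear_neg_adjoint[OF linear_M]])

lemma ergodic_feasibility:
  assumes "1 \<le> k"
  shows "M (ergodic u k) + C (ergodic v k) - d = (1 / weight_sum k) *\<^sub>R (z k - z 0)"
proof -
  have "ergodic feas_res k = ergodic (\<lambda>j. M (u j)) k + ergodic (\<lambda>j. C (v j)) k - ergodic (\<lambda>j. d) k"
    by (simp add: ergodic_def feas_res_def scaleR_add_right scaleR_diff_right sum.distrib sum_subtractf)
  then have "M (ergodic u k) + C (ergodic v k) - d = ergodic feas_res k"
    by (simp add: linear_ergodic[OF linear_M] linear_ergodic[OF linear_C] ergodic_const[OF assms])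
  moreover have "(\<Sum>j=1..k. weight j *\<^sub>R feas_res j) = (\<Sum>j=1..k. z j - z (j - 1))"
    by (intro sum.cong refl) (simp add: z_update)
  moreover have "\<dots> = z k - z 0"
    using sum_telescope''[of 0 k z] by simp
  ultimately show ?thesis by (simp add: ergodic_def)
qed

lemma ergodic_x_minus_y: "ergodic x_seq k - ergodic y_seq k = (1 / weight_sum k) *\<^sub>R (w 0 - w k)"
proof -
  have "(\<Sum>j=1..k. weight j *\<^sub>R (x_seq j - y_seq j)) = (\<Sum>j=1..k. w (j - 1) - w j)"
    by (intro sum.cong refl) (simp add: w_update y_seq_def w_res_def algebra_simps)
  also have "\<dots> = w 0 - w k"
    using sum_telescope''[of 0 k "\<lambda>j. - w j"] by (simp add: sum_negf)
  finally show ?thesis unfolding ergodic_diff by (simp add: ergodic_def)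
qed

lemma displacement_le:
  assumes "p \<in> sol"
  shows "dist (z k, w k) (z 0, w 0) \<le> 2 * dist (z 0, w 0) p"
  using dist_triangle[of "(z k, w k)" "(z 0, w 0)" p] fejer_monotone[OF assms, of k]
  by (simp add: dist_commute)

lemma eps_sum_eq:
  assumes "1 \<le> k"
  shows "weight_sum k * (eps_f k + eps_g k)
       = (\<Sum>j=1..k. weight j * gap j (ergodic x_seq k) (M (ergodic u k)))"
proof -
  have G: "weight_sum k \<noteq> 0" using inverse_weight_sum_le(1)[OF assms] by simp
  have "(u j - ergodic u k) \<bullet> (- adjoint M (y_seq j)) = (M (ergodic u k) - M (u j)) \<bullet> y_seq j" for j
    by (simp add: adjoint_works[OF linear_M] linear_diff[OF linear_M] inner_diff_left)
  moreover have "(v j - ergodic v k) \<bullet> (- adjoint C (x_seq j)) = (C (ergodic v k) - C (v j)) \<bullet> x_seq j" for j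
    by (simp add: adjoint_works[OF linear_C] linear_diff[OF linear_C] inner_diff_left)
  ultimately have "weight_sum k * (eps_f k + eps_g k)
      = (\<Sum>j=1..k. weight j * ((M (ergodic u k) - M (u j)) \<bullet> y_seq j + (C (ergodic v k) - C (v j)) \<bullet> x_seq j))"
    using G by (simp add: eps_f_def eps_g_def distrib_left sum.distrib)
  also have "\<dots> = (\<Sum>j=1..k. weight j * gap j (ergodic x_seq k) (M (ergodic u k)))"
    unfolding gap_def linear_ergodic[OF linear_M] linear_ergodic[OF linear_C]
    by (rule weighted_gap_sum_eq[symmetric, OF weight_sum_def G]) (simp_all add: ergodic_def)
  finally show ?thesis .
qed

lemma ergodic_dist_bound:
  assumes "p \<in> sol" and "1 \<le> k"
  shows "dist (ergodic x_seq k, M (ergodic u k)) p \<le> sqrt (5 + lam\<^sup>2 + 1 / lam\<^sup>2) * dist (z 0, w 0) p"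
proof -
  have "ergodic (\<lambda>j. (x_seq j, M (u j))) k \<in> cball p (sqrt (5 + lam\<^sup>2 + 1 / lam\<^sup>2) * dist (z 0, w 0) p)"
    using iterate_dist_bound[OF assms(1)] by (intro ergodic_in_convex[OF assms(2)]) (auto simp: dist_commute)
  then show ?thesis by (simp add: ergodic_Pair linear_ergodic[OF linear_M] dist_commute)
qed

lemma constant_le_theta: "6 + lam\<^sup>2 + 1 / lam\<^sup>2 \<le> 4 * (1 / (tau\<^sup>2 * (1 - rhobar)\<^sup>2) + 1)"
proof -
  define s where "s = 1 / tau\<^sup>2"
  define X where "X = 1 / (tau\<^sup>2 * (1 - rhobar)\<^sup>2)"
  text \<open>One of \<open>\<lambda>, 1/\<lambda>\<close> is \<open>\<tau> \<le> 1\<close>, the other is \<open>1/\<tau>\<close>.\<close>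
  have "6 + lam\<^sup>2 + 1 / lam\<^sup>2 = 6 + tau\<^sup>2 + s"
    by (auto simp: s_def tau_def min_def power_one_over)
  moreover have "tau\<^sup>2 \<le> 1" using tau_pos tau_le_1 by (simp add: power_le_one)
  moreover have "s \<le> X"
    unfolding s_def X_def using tau_pos rhobar
    by (intro divide_left_mono mult_left_le) (auto simp: power_le_one)
  moreover have "1 \<le> s"
    using tau_pos tau_le_1 by (simp add: s_def power_le_one)
  ultimately show ?thesis unfolding X_def[symmetric] by simp
qed

lemma rescaled_displacement_le:
  assumes "sol \<noteq> {}" and "1 \<le> k" and "norm e \<le> dist (z k, w k) (z 0, w 0)"
  shows "norm ((1 / weight_sum k) *\<^sub>R e) \<le> 4 * infdist (z 0, w 0) sol / (real k * (1 - rhobar) * tau)"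
proof -
  define c where "c = real k * (1 - rhobar) * tau"
  have c: "0 < c" using assms(2) rhobar tau_pos by (simp add: c_def)
  note W = inverse_weight_sum_le[OF assms(2), folded c_def]
  have "norm ((1 / weight_sum k) *\<^sub>R e) * c / 4 \<le> infdist (z 0, w 0) sol"
  proof (rule le_infdist[OF assms(1)])
    fix p assume "p \<in> sol"
    have "norm ((1 / weight_sum k) *\<^sub>R e) = 1 / weight_sum k * norm e" using W(1) by simp
    also have "\<dots> \<le> 2 / c * (2 * dist (z 0, w 0) p)"
      using W assms(3) displacement_le[OF \<open>p \<in> sol\<close>, of k] c by (intro mult_mono) auto
    finally show "norm ((1 / weight_sum k) *\<^sub>R e) * c / 4 \<le> dist (z 0, w 0) p"
      using c W(1) by (simp add: field_simps)
  qed
  then show ?thesis using c W(1) unfolding c_def[symmetric] by (simp add: field_simps)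
qed

lemma rate_feasibility:
  assumes "sol \<noteq> {}" and "1 \<le> k"
  shows "norm (M (ergodic u k) + C (ergodic v k) - d)
           \<le> 4 * infdist (z 0, w 0) sol / (real k * (1 - rhobar) * tau)"
  unfolding ergodic_feasibility[OF assms(2)]
  using norm_fst_le[of "z k - z 0" "w k - w 0"]
  by (intro rescaled_displacement_le[OF assms]) (simp add: dist_norm)

lemma rate_x_minus_y:
  assumes "sol \<noteq> {}" and "1 \<le> k"
  shows "norm (ergodic x_seq k - ergodic y_seq k)
           \<le> 4 * infdist (z 0, w 0) sol / (real k * (1 - rhobar) * tau)"
  unfolding ergodic_x_minus_y
  using norm_snd_le[of "w k - w 0" "z k - z 0"]
  by (intro rescaled_displacement_le[OF assms]) (simp add: dist_norm norm_minus_commute)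

lemma rate_eps:
  assumes "sol \<noteq> {}" and "1 \<le> k"
  shows "eps_f k + eps_g k \<le> 8 * (infdist (z 0, w 0) sol)\<^sup>2 * (1 / (tau\<^sup>2 * (1 - rhobar)\<^sup>2) + 1)
                              / (real k * (1 - rhobar) * tau)"
proof -
  define c where "c = real k * (1 - rhobar) * tau"
  define theta where "theta = 1 / (tau\<^sup>2 * (1 - rhobar)\<^sup>2) + 1"
  define K where "K = 5 + lam\<^sup>2 + 1 / lam\<^sup>2"
  have c: "0 < c" using assms(2) rhobar tau_pos by (simp add: c_def)
  have K: "0 \<le> K" by (simp add: K_def)
  note W = inverse_weight_sum_le[OF assms(2), folded c_def]
  have "eps_f k + eps_g k \<le> 8 * theta / c * (infdist (z 0, w 0) sol)\<^sup>2"
  proof (rule le_infdist_power2[OF assms(1)])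
    have "0 < theta" unfolding theta_def by (intro add_nonneg_pos) auto
    then show "0 < 8 * theta / c" using c by simp
  next
    fix p assume p: "p \<in> sol"
    define r where "r = dist (z 0, w 0) p"
    let ?q = "(ergodic x_seq k, M (ergodic u k))"
    have "dist (z 0, w 0) ?q \<le> r + sqrt K * r"
      using dist_triangle[of "(z 0, w 0)" ?q p] ergodic_dist_bound[OF p assms(2)]
      by (simp add: r_def K_def dist_commute)
    then have "(dist (z 0, w 0) ?q)\<^sup>2 \<le> (r + sqrt K * r)\<^sup>2" by (simp add: power_mono)
    also have "\<dots> \<le> 2 * ((1 + K) * r\<^sup>2)"
      using K zero_le_power2[of "sqrt K * r - r"] by (simp add: power2_eq_square algebra_simps)
    finally have "weight_sum k * (eps_f k + eps_g k) \<le> (1 + K) * r\<^sup>2"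
      using weighted_gap_sum_le[where k=k and qz="fst ?q" and qw="snd ?q"] eps_sum_eq[OF assms(2)] by simp
    then have "eps_f k + eps_g k \<le> 1 / weight_sum k * ((1 + K) * r\<^sup>2)"
      using W(1) by (simp add: field_simps)
    also have "\<dots> \<le> 2 / c * (4 * theta * r\<^sup>2)"
      using W constant_le_theta c K by (intro mult_mono) (auto simp: K_def theta_def)
    finally show "eps_f k + eps_g k \<le> 8 * theta / c * (dist (z 0, w 0) p)\<^sup>2"
      by (simp add: r_def)
  qed
  also have "\<dots> = 8 * (infdist (z 0, w 0) sol)\<^sup>2 * theta / c" by simp
  finally show ?thesis unfolding c_def theta_def .
qed

end

theorem mainTheorem8:
  fixes f :: "'a::euclidean_space \<Rightarrow> ereal" and g :: "'b::euclidean_space \<Rightarrow> ereal"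
    and M :: "'a \<Rightarrow> 'c::euclidean_space" and C :: "'b \<Rightarrow> 'c" and d :: 'c
    and lam rhobar :: real
    and u :: "nat \<Rightarrow> 'a" and v :: "nat \<Rightarrow> 'b" and z w :: "nat \<Rightarrow> 'c"
    and gam rho :: "nat \<Rightarrow> real"
    and x y :: "nat \<Rightarrow> 'c" and Gam :: "nat \<Rightarrow> real"
    and ubar :: "nat \<Rightarrow> 'a" and vbar :: "nat \<Rightarrow> 'b" and xbar ybar :: "nat \<Rightarrow> 'c"
    and epsu epsv :: "nat \<Rightarrow> real" and d0 tau theta :: real
  assumes f: "proper_closed_convex f" and g: "proper_closed_convex g"
    and M: "linear M" and C: "linear C"
    and A1: "\<exists>us vs zs. saddle_point f g M C d us vs zs"
    and A2: "rel_interior (edom (fconj f)) \<inter> range (adjoint M) \<noteq> {}"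
    and A3: "rel_interior (edom (fconj g)) \<inter> range (adjoint C) \<noteq> {}"
    and run: "pmm_run f g M C d lam rhobar u v z w gam rho"
    and x_def: "x = (\<lambda>k. z (k-1) + lam *\<^sub>R w (k-1) + lam *\<^sub>R (C (v k) - d))"
    and y_def: "y = (\<lambda>k. z (k-1) + lam *\<^sub>R w (k-1) + lam *\<^sub>R (C (v k) - d) - lam *\<^sub>R (w (k-1) - M (u k)))"
    and Gam_def: "Gam = (\<lambda>k. \<Sum>j=1..k. rho j * gam j)"
    and ubar_def: "ubar = (\<lambda>k. (1 / Gam k) *\<^sub>R (\<Sum>j=1..k. (rho j * gam j) *\<^sub>R u j))"
    and vbar_def: "vbar = (\<lambda>k. (1 / Gam k) *\<^sub>R (\<Sum>j=1..k. (rho j * gam j) *\<^sub>R v j))"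
    and xbar_def: "xbar = (\<lambda>k. (1 / Gam k) *\<^sub>R (\<Sum>j=1..k. (rho j * gam j) *\<^sub>R x j))"
    and ybar_def: "ybar = (\<lambda>k. (1 / Gam k) *\<^sub>R (\<Sum>j=1..k. (rho j * gam j) *\<^sub>R y j))"
    and epsu_def: "epsu = (\<lambda>k. (1 / Gam k) * (\<Sum>j=1..k. rho j * gam j * ((u j - ubar k) \<bullet> (- adjoint M (y j)))))"
    and epsv_def: "epsv = (\<lambda>k. (1 / Gam k) * (\<Sum>j=1..k. rho j * gam j * ((v j - vbar k) \<bullet> (- adjoint C (x j)))))"
    and d0_def: "d0 = infdist (z 0, w 0) (Se (h1 f M) (h2 g C d))"
    and tau_def: "tau = min lam (1 / lam)"
    and theta_def: "theta = 1 / (tau\<^sup>2 * (1 - rhobar)\<^sup>2) + 1"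
  shows "\<forall>k::nat. k \<ge> 1 \<longrightarrow>
           - adjoint C (xbar k) \<in> esubdiff (epsv k) g (vbar k) \<and>
           - adjoint M (ybar k) \<in> esubdiff (epsu k) f (ubar k) \<and>
           norm (M (ubar k) + C (vbar k) - d) \<le> 4 * d0 / (real k * (1 - rhobar) * tau) \<and>
           norm (xbar k - ybar k) \<le> 4 * d0 / (real k * (1 - rhobar) * tau) \<and>
           epsu k + epsv k \<le> 8 * d0\<^sup>2 * theta / (real k * (1 - rhobar) * tau)"
proof -
  interpret P: pmm f g M C d lam rhobar u v z w gam rho
    using f g M C run by (simp add: pmm_def proper_closed_convex_def)
  from A1 obtain us vs zs where "saddle_point f g M C d us vs zs" by blast
  then have sol: "P.sol \<noteq> {}"
    using saddle_point_in_Se[OF P.proper_f P.proper_g M C] by blast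
  have Gam: "Gam = P.weight_sum"
    by (simp add: fun_eq_iff Gam_def P.weight_sum_def P.weight_def)
  have seqs: "x = P.x_seq" "y = P.y_seq" "tau = P.tau"
    by (simp_all add: fun_eq_iff x_def y_def P.x_seq_def P.y_seq_def tau_def P.tau_def)
  have avgs: "ubar = P.ergodic u" "vbar = P.ergodic v" "xbar = P.ergodic x" "ybar = P.ergodic y"
    by (simp_all add: fun_eq_iff ubar_def vbar_def xbar_def ybar_def P.ergodic_def Gam P.weight_def)
  have eps: "epsu = P.eps_f" "epsv = P.eps_g"
    by (simp_all add: fun_eq_iff epsu_def epsv_def P.eps_f_def P.eps_g_def avgs Gam seqs P.weight_def)
  show ?thesis
    unfolding eps avgs seqs d0_def theta_def
    using P.ergodic_subdiff_g P.ergodic_subdiff_f P.rate_feasibility[OF sol] P.rate_x_minus_y[OF sol]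
      P.rate_eps[OF sol]
    by simp
qed

end
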